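(* Consider the job set $J$ described in the context with $p_\ell$ sufficiently large. Let $j\in\{3,\dots,n\}$ and let $\sigma=(M_1,M_2)$ be a schedule of $J$ with $\omega_j(\sigma)=0$, $\omega_i(\sigma)=1$ for all $i\in\{1,\dots,j-1\}$, and $\ell\in M_1$. Then $\sigma$ can be improved, by a sequence of improving 3-swaps, to a schedule with $\omega_j=1$ and $\omega_i=0$ for all $i\in\{1,\dots,j-1\}$.
   Context: Two identical machines; a schedule $\sigma=(M_1,M_2)$ partitions the jobs into sets processed on machines 1 and 2, with loads $L_i=\sum_{j\in M_i}p_j$ and makespan $\max_iL_i$. Fix $n\ge3$ and the job set $J=\{a_i,b_i,c_i:1\le i\le n\}\cup\{\ell\}$ with $p_{a_i}=2^{n+i+1}+2^{i-1}$, $p_{b_i}=2^{n+i}$, $p_{c_i}=2^{n+i-1}+2^{i-1}$, and $p_\ell$ a sufficiently large number. For each $i$ define $\omega_i(\sigma)=0$ if $a_i\in M_1$ and $b_i,c_i\in M_2$; $\omega_i(\sigma)=1$ if $a_i\in M_2$ and $b_i,c_i\in M_1$; and $\omega_i(\sigma)=-1$ otherwise. A 3-swap interchanges the machine assignments of exactly three jobs (some on each machine); it is improving if the makespan strictly decreases. *)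

theory Defs
  imports Main
begin

datatype job = A nat | B nat | C nat | L

definition jobs :: "nat \<Rightarrow> job set" where
  "jobs n = {A i | i. 1 \<le> i \<and> i \<le> n} \<union> {B i | i. 1 \<le> i \<and> i \<le> n}
            \<union> {C i | i. 1 \<le> i \<and> i \<le> n} \<union> {L}"

fun ptime :: "nat \<Rightarrow> nat \<Rightarrow> job \<Rightarrow> nat" where
  "ptime n pl (A i) = 2 ^ (n + i + 1) + 2 ^ (i - 1)"
| "ptime n pl (B i) = 2 ^ (n + i)"
| "ptime n pl (C i) = 2 ^ (n + i - 1) + 2 ^ (i - 1)"
| "ptime n pl L = pl"

text \<open>A schedule is represented by the set M1 \<subseteq> jobs n of jobs on machine 1;
  machine 2 gets M2 = jobs n - M1.\<close>
definition load :: "nat \<Rightarrow> nat \<Rightarrow> job set \<Rightarrow> nat" where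
  "load n pl M = (\<Sum>x\<in>M. ptime n pl x)"

definition makespan :: "nat \<Rightarrow> nat \<Rightarrow> job set \<Rightarrow> nat" where
  "makespan n pl M1 = max (load n pl M1) (load n pl (jobs n - M1))"

definition omega :: "nat \<Rightarrow> job set \<Rightarrow> nat \<Rightarrow> int" where
  "omega n M1 i =
     (if A i \<in> M1 \<and> B i \<in> jobs n - M1 \<and> C i \<in> jobs n - M1 then 0
      else if A i \<in> jobs n - M1 \<and> B i \<in> M1 \<and> C i \<in> M1 then 1
      else -1)"

definition three_swap :: "nat \<Rightarrow> job set \<Rightarrow> job set \<Rightarrow> bool" where
  "three_swap n M1 M1' \<longleftrightarrow> (\<exists>S. S \<subseteq> jobs n \<and> card S = 3 \<and> S \<inter> M1 \<noteq> {}
       \<and> S \<inter> (jobs n - M1) \<noteq> {} \<and> M1' = (M1 - S) \<union> (S \<inter> (jobs n - M1)))"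

definition improving_3swap :: "nat \<Rightarrow> nat \<Rightarrow> job set \<Rightarrow> job set \<Rightarrow> bool" where
  "improving_3swap n pl M1 M1' \<longleftrightarrow>
     three_swap n M1 M1' \<and> makespan n pl M1' < makespan n pl M1"

end

(* Once p_L is at least the total of all other processing times, the machine carrying L
   is always the critical one, so a 3-swap leaving L in place is improving exactly when it
   lowers the load of that machine. Three kinds of such swaps perform the flip: for
   i = 1, ..., j-2 trade B_i and C_(i+1) for A_i, then C_1 and B_(j-1) for C_j, and finally
   A_j for A_(j-1) and B_j. The low-order terms 2^(i-1) make each of these comparisons strict. *)
theory Submission
  imports Defs
begin

lemma jobs_mem [simp]:
  "A i \<in> jobs n \<longleftrightarrow> 1 \<le> i \<and> i \<le> n"
  "B i \<in> jobs n \<longleftrightarrow> 1 \<le> i \<and> i \<le> n"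
  "C i \<in> jobs n \<longleftrightarrow> 1 \<le> i \<and> i \<le> n"
  "L \<in> jobs n"
  unfolding jobs_def by auto

lemma finite_jobs [simp]: "finite (jobs n)"
proof -
  have "jobs n = A ` {1..n} \<union> B ` {1..n} \<union> C ` {1..n} \<union> {L}"
    unfolding jobs_def by auto
  then show ?thesis by simp
qed

lemma omega_eq_0_iff:
  assumes "M \<subseteq> jobs n" "1 \<le> i" "i \<le> n"
  shows "omega n M i = 0 \<longleftrightarrow> A i \<in> M \<and> B i \<notin> M \<and> C i \<notin> M"
  using assms unfolding omega_def by auto

lemma omega_eq_1_iff:
  assumes "M \<subseteq> jobs n" "1 \<le> i" "i \<le> n"
  shows "omega n M i = 1 \<longleftrightarrow> A i \<notin> M \<and> B i \<in> M \<and> C i \<in> M"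
  using assms unfolding omega_def by auto

lemma load_eq_load_0_if_L_notin:
  assumes "L \<notin> M"
  shows "load n pl M = load n 0 M"
proof -
  have "ptime n pl x = ptime n 0 x" if "x \<in> M" for x
    using assms that by (cases x) auto
  then show ?thesis unfolding load_def by (rule sum.cong[OF refl])
qed

lemma makespan_eq_load:
  assumes "M \<subseteq> jobs n" "L \<in> M" "load n 0 (jobs n) \<le> pl"
  shows "makespan n pl M = load n pl M"
proof -
  have "load n pl (jobs n - M) = load n 0 (jobs n - M)"
    using assms(2) by (intro load_eq_load_0_if_L_notin) auto
  also have "\<dots> \<le> load n 0 (jobs n)"
    unfolding load_def by (rule sum_mono2) auto
  also have "\<dots> \<le> pl" by fact
  also have "pl \<le> load n pl M"
    using member_le_sum[OF assms(2), of "ptime n pl"] finite_subset[OF assms(1)]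
    unfolding load_def by simp
  finally show ?thesis unfolding makespan_def by simp
qed

lemma improving_3swap_if_load_less:
  assumes M: "M \<subseteq> jobs n" "L \<in> M" "load n 0 (jobs n) \<le> pl"
    and XY: "X \<subseteq> M" "Y \<subseteq> jobs n - M" "X \<noteq> {}" "Y \<noteq> {}" "card (X \<union> Y) = 3" "L \<notin> X"
    and less: "load n pl Y < load n pl X"
  shows "improving_3swap n pl M (M - X \<union> Y)"
proof -
  have fin: "finite M" "finite Y"
    using finite_subset[OF M(1)] finite_subset[OF XY(2)] by auto
  have "three_swap n M (M - X \<union> Y)"
    unfolding three_swap_def
    by (rule exI[of _ "X \<union> Y"]) (use M XY in auto)
  moreover have "load n pl M = load n pl (M - X) + load n pl X"
    using fin XY(1) unfolding load_def by (metis sum.subset_diff)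
  moreover have "load n pl (M - X \<union> Y) = load n pl (M - X) + load n pl Y"
    using fin XY(2) unfolding load_def by (subst sum.union_disjoint) auto
  moreover have "makespan n pl (M - X \<union> Y) = load n pl (M - X \<union> Y)"
    using M XY by (intro makespan_eq_load) auto
  ultimately show ?thesis
    unfolding improving_3swap_def using makespan_eq_load[OF M] less by simp
qed

lemma ptime_A_less_B_C_Suc:
  assumes "1 \<le> i"
  shows "ptime n pl (A i) < ptime n pl (B i) + ptime n pl (C (Suc i))"
proof -
  obtain k where "i = Suc k" using assms by (cases i) auto
  then show ?thesis by simp
qed

lemma ptime_C_Suc_less_C_1_B:
  assumes "i \<le> n"
  shows "ptime n pl (C (Suc i)) < ptime n pl (C 1) + ptime n pl (B i)"
  using assms by (simp add: less_Suc_eq_le)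

lemma ptime_A_B_Suc_less_A_Suc:
  assumes "1 \<le> i"
  shows "ptime n pl (A i) + ptime n pl (B (Suc i)) < ptime n pl (A (Suc i))"
proof -
  obtain k where "i = Suc k" using assms by (cases i) auto
  then show ?thesis by simp
qed

lemma improving_chain_A_for_B_C:
  assumes M: "M \<subseteq> jobs n" "L \<in> M" "load n 0 (jobs n) \<le> pl"
    and before: "\<And>i. 1 \<le> i \<Longrightarrow> i \<le> m \<Longrightarrow> A i \<notin> M \<and> B i \<in> M \<and> C (Suc i) \<in> M"
  shows "(improving_3swap n pl)\<^sup>*\<^sup>* M (M - (B ` {1..m} \<union> C ` {2..Suc m}) \<union> A ` {1..m})"
  using before
proof (induction m)
  case 0
  then show ?case by simp
next
  case (Suc m)
  define M' where "M' = M - (B ` {1..m} \<union> C ` {2..Suc m}) \<union> A ` {1..m}"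
  have "(improving_3swap n pl)\<^sup>*\<^sup>* M M'"
    using Suc by (simp add: M'_def)
  moreover have "improving_3swap n pl M' (M' - {B (Suc m), C (Suc (Suc m))} \<union> {A (Suc m)})"
  proof (rule improving_3swap_if_load_less)
    have "A i \<in> jobs n" if "1 \<le> i" "i \<le> m" for i
      using Suc.prems[OF that(1)] that M(1) by auto
    then show "M' \<subseteq> jobs n"
      using M(1) by (auto simp: M'_def)
    show "{B (Suc m), C (Suc (Suc m))} \<subseteq> M'" "{A (Suc m)} \<subseteq> jobs n - M'"
      using Suc.prems[of "Suc m"] M(1) by (auto simp: M'_def)
    show "load n pl {A (Suc m)} < load n pl {B (Suc m), C (Suc (Suc m))}"
      using ptime_A_less_B_C_Suc[of "Suc m" n pl] by (simp add: load_def)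
  qed (use M in \<open>auto simp: M'_def\<close>)
  moreover have "M' - {B (Suc m), C (Suc (Suc m))} \<union> {A (Suc m)}
      = M - (B ` {1..Suc m} \<union> C ` {2..Suc (Suc m)}) \<union> A ` {1..Suc m}"
    using Suc.prems[of "Suc m"] by (auto simp: M'_def)
  ultimately show ?case by simp
qed

lemma improving_path_flipping_prefix:
  assumes M: "M \<subseteq> jobs n" "L \<in> M" "load n 0 (jobs n) \<le> pl" and j: "2 \<le> j" "j \<le> n"
    and at_j: "omega n M j = 0" and below_j: "\<forall>i\<in>{1..<j}. omega n M i = 1"
  shows "\<exists>M'. (improving_3swap n pl)\<^sup>*\<^sup>* M M' \<and> omega n M' j = 1
           \<and> (\<forall>i\<in>{1..<j}. omega n M' i = 0)"
proof -
  obtain m where m: "j = Suc (Suc m)"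
    using j(1) by (metis add_2_eq_Suc le_Suc_ex)
  have at_j: "A j \<in> M" "B j \<notin> M" "C j \<notin> M"
    using at_j omega_eq_0_iff[OF M(1)] j by auto
  have below_j: "A i \<notin> M \<and> B i \<in> M \<and> C i \<in> M" if "1 \<le> i" "i \<le> Suc m" for i
    using below_j omega_eq_1_iff[OF M(1)] that j m by auto
  define M2 where "M2 = M - (B ` {1..m} \<union> C ` {2..Suc m}) \<union> A ` {1..m}"
  define M3 where "M3 = M2 - {C 1, B (Suc m)} \<union> {C j}"
  define M4 where "M4 = M3 - {A j} \<union> {A (Suc m), B j}"
  have sub: "M2 \<subseteq> jobs n" "M3 \<subseteq> jobs n" "M4 \<subseteq> jobs n"
    using M(1) j m by (auto simp: M2_def M3_def M4_def)
  have "(improving_3swap n pl)\<^sup>*\<^sup>* M M2"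
    unfolding M2_def using below_j by (intro improving_chain_A_for_B_C[OF M]) auto
  moreover have "improving_3swap n pl M2 M3"
    unfolding M3_def
  proof (rule improving_3swap_if_load_less[OF sub(1)])
    show "load n pl {C j} < load n pl {C 1, B (Suc m)}"
      using ptime_C_Suc_less_C_1_B[of "Suc m" n pl] j m by (simp add: load_def)
  qed (use M at_j below_j[of 1] below_j[of "Suc m"] j m in \<open>auto simp: M2_def\<close>)
  moreover have "improving_3swap n pl M3 M4"
    unfolding M4_def
  proof (rule improving_3swap_if_load_less[OF sub(2)])
    show "load n pl {A (Suc m), B j} < load n pl {A j}"
      using ptime_A_B_Suc_less_A_Suc[of "Suc m" n pl] m by (simp add: load_def)
  qed (use M at_j below_j[of "Suc m"] j m in \<open>auto simp: M2_def M3_def\<close>)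
  moreover have "omega n M4 j = 1"
    using omega_eq_1_iff[OF sub(3)] j at_j m by (auto simp: M2_def M3_def M4_def)
  moreover have "omega n M4 i = 0" if "i \<in> {1..<j}" for i
    using omega_eq_0_iff[OF sub(3)] below_j[of i] that j m
    by (auto simp: M2_def M3_def M4_def)
  ultimately show ?thesis
    by (meson rtranclp.rtrancl_into_rtrancl)
qed

theorem lemma9:
  fixes n :: nat
  assumes "n \<ge> 3"
  shows "\<exists>P0. \<forall>pl \<ge> P0. \<forall>j M1.
           3 \<le> j \<and> j \<le> n \<and> M1 \<subseteq> jobs n \<and> L \<in> M1
           \<and> omega n M1 j = 0 \<and> (\<forall>i\<in>{1..<j}. omega n M1 i = 1)
           \<longrightarrow> (\<exists>M1'. (improving_3swap n pl)\<^sup>*\<^sup>* M1 M1'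
                  \<and> omega n M1' j = 1 \<and> (\<forall>i\<in>{1..<j}. omega n M1' i = 0))"
  using improving_path_flipping_prefix
  by (intro exI[of _ "load n 0 (jobs n)"] allI impI) auto

end
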